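(* Fix $\alpha>1$, $R>0$, an integer $T>1$, $G_c>0$, $N_0>0$ and $\beta,\delta,\mu>0$. For $\rho_r>0$ put $\Theta(\rho_r)=(\alpha,\rho_r,\beta\rho_r,\delta\rho_r,\mu\rho_r,T)$ and $\eta^\star_{zf}(R,\Theta)=\frac{G_c}{N_0}\zeta^\star_{zf}(R,\Theta)$. If $\rho_{r_2}>\rho_{r_1}>0$, then $\eta^\star_{zf}(R,\Theta(\rho_{r_1}))>\eta^\star_{zf}(R,\Theta(\rho_{r_2}))$.
   Context: For $\Theta=(\alpha,\rho_r,\rho_d,\rho_s,\rho_0,T)$ and $M>K$, $1\le K\le\tau<T$ let $$\gamma_u=\frac{K+\tau}{2\tau(M-K)}\Big(2^{\frac{R}{K(1-\tau/T)}}-1\Big)+\sqrt{\Big(\frac{K+\tau}{2\tau(M-K)}\Big(2^{\frac{R}{K(1-\tau/T)}}-1\Big)\Big)^2+\frac{2^{\frac{R}{K(1-\tau/T)}}-1}{\tau(M-K)}},$$ $$\frac{R}{\zeta_{zf}(M,K,\tau,R,\Theta)}=\alpha K\gamma_u+\rho_s+K\Big(\rho_d+\frac{8K^2\rho_0}{3T}\Big)+M\Big(\rho_r+2K\rho_0+\frac{4K^2\rho_0}{T}\Big).$$ $\zeta^\star_{zf}(R,\Theta)$ is the maximum of $\zeta_{zf}$ over integers $(M,K,\tau)$ with $1\le K\le\tau<T$, $M>K$. *)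

theory Defs
  imports Complex_Main
begin

text \<open>Theta = (alpha, rho_r, rho_d, rho_s, rho_0, T) is passed as a tuple.\<close>
type_synonym params = "real \<times> real \<times> real \<times> real \<times> real \<times> nat"

definition gamma_u :: "nat \<Rightarrow> nat \<Rightarrow> nat \<Rightarrow> real \<Rightarrow> nat \<Rightarrow> real" where
  "gamma_u M K tau R T =
    (let e = 2 powr (R / (real K * (1 - real tau / real T))) - 1;
         a = (real K + real tau) / (2 * real tau * (real M - real K)) * e
     in a + sqrt (a\<^sup>2 + e / (real tau * (real M - real K))))"

definition zeta_zf :: "nat \<Rightarrow> nat \<Rightarrow> nat \<Rightarrow> real \<Rightarrow> params \<Rightarrow> real" where
  "zeta_zf M K tau R Theta =
    (case Theta of (alpha, rr, rd, rs, r0, T) \<Rightarrow>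
      R / (alpha * real K * gamma_u M K tau R T + rs
           + real K * (rd + 8 * (real K)\<^sup>2 * r0 / (3 * real T))
           + real M * (rr + 2 * real K * r0 + 4 * (real K)\<^sup>2 * r0 / real T)))"

text \<open>The maximum over the feasible integer triples, written as a supremum
  (it is attained, so this is the maximum).\<close>
definition zeta_star :: "real \<Rightarrow> params \<Rightarrow> real" where
  "zeta_star R Theta =
    (case Theta of (alpha, rr, rd, rs, r0, T) \<Rightarrow>
      Sup {zeta_zf M K tau R Theta | M K tau.
             1 \<le> K \<and> K \<le> tau \<and> tau < T \<and> K < M})"

definition eta_star :: "real \<Rightarrow> real \<Rightarrow> real \<Rightarrow> params \<Rightarrow> real" where
  "eta_star Gc N0 R Theta = Gc / N0 * zeta_star R Theta"

end

theory Submission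
  imports Defs
begin

text \<open>Scaling all circuit powers by \<open>\<rho>\<^sub>r\<close> writes every \<open>R / \<zeta>\<^sub>z\<^sub>f\<close> as \<open>A + \<rho>\<^sub>r B\<close> with
  \<open>A \<ge> 0\<close> and \<open>B \<ge> 1\<close>, both independent of \<open>\<rho>\<^sub>r\<close>. Raising \<open>\<rho>\<^sub>r\<close> by \<open>d\<close> therefore raises every
  denominator \<open>u\<close> by at least \<open>d\<close>. If \<open>S\<close> is the supremum of \<open>R / u\<close> then \<open>u \<ge> R / S\<close>
  for every triple, so every new value is at most \<open>R / (R / S + d) < S\<close>: the gap is
  uniform over the infinitely many triples, and the supremum strictly drops.\<close>

definition feasible_triples :: "nat \<Rightarrow> (nat \<times> nat \<times> nat) set" where
  "feasible_triples T = {(M, K, tau). 1 \<le> K \<and> K \<le> tau \<and> tau < T \<and> K < M}"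

lemma Sup_divide_shifted_less:
  fixes u v :: "'a \<Rightarrow> real" and c d R :: real
  assumes "I \<noteq> {}" and "0 < c" and "\<And>i. i \<in> I \<Longrightarrow> c \<le> u i"
    and "0 < d" and "\<And>i. i \<in> I \<Longrightarrow> u i + d \<le> v i" and "0 < R"
  shows "Sup ((\<lambda>i. R / v i) ` I) < Sup ((\<lambda>i. R / u i) ` I)"
proof -
  define S where "S = Sup ((\<lambda>i. R / u i) ` I)"
  have bdd: "bdd_above ((\<lambda>i. R / u i) ` I)"
    using assms(2,3,6) by (intro bdd_aboveI2[of _ _ "R / c"]) (simp add: frac_le)
  have below_S: "R / u i \<le> S" if "i \<in> I" for i
    unfolding S_def by (rule cSup_upper[OF imageI[OF that] bdd])
  have u_pos: "0 < u i" if "i \<in> I" for i using assms(2) assms(3)[OF that] by linarith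
  obtain i0 where "i0 \<in> I" using assms(1) by blast
  then have "0 < R / u i0" using u_pos assms(6) by simp
  with below_S[OF \<open>i0 \<in> I\<close>] have "0 < S" by linarith
  have "R / v i \<le> R / (R / S + d)" if "i \<in> I" for i
  proof -
    have "R / S \<le> u i" using below_S[OF that] u_pos[OF that] \<open>0 < S\<close> by (simp add: field_simps)
    then have "R / S + d \<le> v i" using assms(5)[OF that] by linarith
    moreover have "0 < R / S + d" using \<open>0 < S\<close> assms(4,6) by (simp add: add_pos_pos)
    ultimately show ?thesis using assms(6) by (simp add: frac_le)
  qed
  then have "Sup ((\<lambda>i. R / v i) ` I) \<le> R / (R / S + d)"
    using assms(1) by (intro cSup_least) auto
  also have "\<dots> < R / (R / S)"
    using \<open>0 < S\<close> assms(4,6) by (intro frac_less2) auto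
  also have "\<dots> = S" using \<open>0 < S\<close> assms(6) by simp
  finally show ?thesis unfolding S_def .
qed

lemma gamma_u_nonneg:
  assumes "0 \<le> R" and "tau \<le> T" and "K \<le> M"
  shows "0 \<le> gamma_u M K tau R T"
proof -
  define e where "e = 2 powr (R / (real K * (1 - real tau / real T))) - 1"
  define a where "a = (real K + real tau) / (2 * real tau * (real M - real K)) * e"
  have "real tau / real T \<le> 1" using assms(2) by (cases "T = 0") auto
  then have "0 \<le> R / (real K * (1 - real tau / real T))" using assms(1) by simp
  then have "0 \<le> e" unfolding e_def using ge_one_powr_ge_zero[of 2] by simp
  then have "0 \<le> e / (real tau * (real M - real K))" using assms(3) by simp
  then have "sqrt (a\<^sup>2) \<le> sqrt (a\<^sup>2 + e / (real tau * (real M - real K)))"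
    by (simp del: real_sqrt_abs)
  then have "\<bar>a\<bar> \<le> sqrt (a\<^sup>2 + e / (real tau * (real M - real K)))" by simp
  then show ?thesis unfolding gamma_u_def Let_def e_def[symmetric] a_def[symmetric] by linarith
qed

lemma zeta_star_eq_Sup_feasible:
  "zeta_star R (alpha, rr, rd, rs, r0, T)
     = Sup ((\<lambda>(M, K, tau). zeta_zf M K tau R (alpha, rr, rd, rs, r0, T)) ` feasible_triples T)"
  unfolding zeta_star_def feasible_triples_def by (simp add: image_def) (metis (no_types))

lemma zeta_zf_scaled:
  "zeta_zf M K tau R (alpha, r, beta * r, delta * r, mu * r, T)
     = R / (alpha * real K * gamma_u M K tau R T
            + r * (delta + real K * (beta + 8 * (real K)\<^sup>2 * mu / (3 * real T))
                   + real M * (1 + 2 * real K * mu + 4 * (real K)\<^sup>2 * mu / real T)))"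
  unfolding zeta_zf_def by (simp add: algebra_simps)

theorem corollary2:
  fixes alpha R Gc N0 beta delta mu r1 r2 :: real and T :: nat
  assumes "alpha > 1" and "R > 0" and "T > 1" and "Gc > 0" and "N0 > 0"
    and "beta > 0" and "delta > 0" and "mu > 0"
    and "0 < r1" and "r1 < r2"
  shows "eta_star Gc N0 R (alpha, r1, beta * r1, delta * r1, mu * r1, T)
         > eta_star Gc N0 R (alpha, r2, beta * r2, delta * r2, mu * r2, T)"
proof -
  define A where "A = (\<lambda>(M, K, tau). alpha * real K * gamma_u M K tau R T)"
  define B where "B = (\<lambda>(M, K, tau :: nat). delta + real K * (beta + 8 * (real K)\<^sup>2 * mu / (3 * real T))
                        + real M * (1 + 2 * real K * mu + 4 * (real K)\<^sup>2 * mu / real T))"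
  have zeta: "zeta_star R (alpha, r, beta * r, delta * r, mu * r, T)
                = Sup ((\<lambda>i. R / (A i + r * B i)) ` feasible_triples T)" for r
    unfolding zeta_star_eq_Sup_feasible
    by (intro arg_cong[where f = Sup] image_cong) (auto simp: zeta_zf_scaled A_def B_def)
  have "(2, 1, 1) \<in> feasible_triples T" using assms(3) by (simp add: feasible_triples_def)
  then have nonempty: "feasible_triples T \<noteq> {}" by blast
  have A_nonneg: "0 \<le> A i" if "i \<in> feasible_triples T" for i
    using that assms(1,2) gamma_u_nonneg[of R] by (auto simp: feasible_triples_def A_def)
  have B_ge_1: "1 \<le> B i" if "i \<in> feasible_triples T" for i
  proof -
    obtain M K tau where i: "i = (M, K, tau)" by (cases i)
    with that have "1 \<le> K" "K < M" by (auto simp: feasible_triples_def)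
    have "1 \<le> real M" using \<open>1 \<le> K\<close> \<open>K < M\<close> by simp
    moreover have "1 \<le> 1 + 2 * real K * mu + 4 * (real K)\<^sup>2 * mu / real T"
      using assms(8) by simp
    ultimately have "1 * 1 \<le> real M * (1 + 2 * real K * mu + 4 * (real K)\<^sup>2 * mu / real T)"
      by (rule mult_mono) simp_all
    moreover have "0 \<le> real K * (beta + 8 * (real K)\<^sup>2 * mu / (3 * real T))"
      using assms(6,8) by simp
    ultimately show ?thesis using assms(7) by (simp add: i B_def)
  qed
  have "zeta_star R (alpha, r2, beta * r2, delta * r2, mu * r2, T)
          < zeta_star R (alpha, r1, beta * r1, delta * r1, mu * r1, T)"
    unfolding zeta
  proof (rule Sup_divide_shifted_less[OF nonempty assms(9) _ _ _ assms(2)])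
    fix i assume i: "i \<in> feasible_triples T"
    have "r1 * 1 \<le> r1 * B i" using B_ge_1[OF i] assms(9) by (intro mult_left_mono) auto
    then show "r1 \<le> A i + r1 * B i" using A_nonneg[OF i] by simp
    have "(r2 - r1) * 1 \<le> (r2 - r1) * B i" using B_ge_1[OF i] assms(10) by (intro mult_left_mono) auto
    then show "A i + r1 * B i + (r2 - r1) \<le> A i + r2 * B i" by (simp add: algebra_simps)
  qed (use assms(10) in simp)
  then show ?thesis
    unfolding eta_star_def using assms(4,5) by (intro mult_strict_left_mono) auto
qed

end
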